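(* $BQC(MAJ_n)=\Omega(n/\log n)$.
   Context: For $x,y\in\{0,1\}^n$, $MAJ_n(x,y)=1$ iff $\sum_{i=1}^n(x_i\wedge y_i)\ge n/2$. Quantum communication model (Yao, no prior entanglement): Alice receives $x$, Bob $y$; each holds private qubits initialized to the input and $|0\rangle$; in each round one player applies a unitary to his qubits and sends one qubit; at the end a qubit is measured giving the output; cost is the number of qubits exchanged. $BQC(f)$ is the minimum cost of a protocol computing $f$ with error probability at most $1/3$ on every input. *)

theory Defs
  imports Complex_Main "HOL-Library.Landau_Symbols"
begin

text \<open>Model of Yao's quantum communication model (no prior entanglement).  A computational basis
  state is a set of indices (the qubits that are 1); a pure state is a function
  from basis states (subsets of {0..<N}) to complex amplitudes.
  At any time, qubits are owned either by Alice (set A) or by Bob ({0..<N} - A).\<close>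

type_synonym qstate = "nat set \<Rightarrow> complex"
type_synonym qop = "nat set \<Rightarrow> nat set \<Rightarrow> complex"

definition unitary_on :: "nat set \<Rightarrow> qop \<Rightarrow> bool" where
  "unitary_on S U \<longleftrightarrow>
     (\<forall>a\<in>Pow S. \<forall>a'\<in>Pow S.
        (\<Sum>c\<in>Pow S. cnj (U c a) * U c a') = (if a = a' then 1 else 0))"

text \<open>Apply U (acting on the qubits in S) tensored with the identity on the other qubits.\<close>
definition apply_op :: "nat set \<Rightarrow> qop \<Rightarrow> qstate \<Rightarrow> qstate" where
  "apply_op S U \<psi> = (\<lambda>b. \<Sum>c\<in>Pow S. U (b \<inter> S) c * \<psi> (c \<union> (b - S)))"

text \<open>A round: (speaker, unitary, sent qubit). Speaker True = Alice, False = Bob.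
  The speaker applies a unitary to all qubits he currently holds and then
  sends one of them to the other player.\<close>
type_synonym qround = "bool \<times> qop \<times> nat"

fun speaker_qubits :: "nat \<Rightarrow> bool \<Rightarrow> nat set \<Rightarrow> nat set" where
  "speaker_qubits N w A = (if w then A else {0..<N} - A)"

fun next_owner :: "bool \<Rightarrow> nat \<Rightarrow> nat set \<Rightarrow> nat set" where
  "next_owner w q A = (if w then A - {q} else A \<union> {q})"

fun valid_rounds :: "nat \<Rightarrow> qround list \<Rightarrow> nat set \<Rightarrow> bool" where
  "valid_rounds N [] A = True"
| "valid_rounds N ((w, U, q) # rs) A =
     (q \<in> speaker_qubits N w A \<and> unitary_on (speaker_qubits N w A) U
      \<and> valid_rounds N rs (next_owner w q A))"

fun exec_rounds :: "nat \<Rightarrow> qround list \<Rightarrow> nat set \<Rightarrow> qstate \<Rightarrow> qstate" where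
  "exec_rounds N [] A \<psi> = \<psi>"
| "exec_rounds N ((w, U, q) # rs) A \<psi> =
     exec_rounds N rs (next_owner w q A) (apply_op (speaker_qubits N w A) U \<psi>)"

text \<open>A protocol for inputs of length n: N total qubits; Alice initially holds
  the set A0 containing her input qubits 0..<n (the rest of A0 are her ancillas
  in state |0>); Bob holds the complement, containing his input qubits n..<2n
  (the rest are his ancillas in state |0>); a list of rounds; an output qubit.\<close>
record qprotocol =
  nqubits :: nat
  alice_init :: "nat set"
  rounds :: "qround list"
  out_qubit :: nat

definition init_state :: "nat \<Rightarrow> (nat \<Rightarrow> bool) \<Rightarrow> (nat \<Rightarrow> bool) \<Rightarrow> qstate" where
  "init_state n x y =
     (\<lambda>b. if b = {i. i < n \<and> x i} \<union> {n + i |i. i < n \<and> y i} then 1 else 0)"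

definition wf_protocol :: "nat \<Rightarrow> qprotocol \<Rightarrow> bool" where
  "wf_protocol n P \<longleftrightarrow>
     2 * n \<le> nqubits P \<and> alice_init P \<subseteq> {0..<nqubits P}
     \<and> {0..<n} \<subseteq> alice_init P \<and> {n..<2*n} \<inter> alice_init P = {}
     \<and> out_qubit P < nqubits P
     \<and> valid_rounds (nqubits P) (rounds P) (alice_init P)"

definition final_state :: "nat \<Rightarrow> qprotocol \<Rightarrow> (nat \<Rightarrow> bool) \<Rightarrow> (nat \<Rightarrow> bool) \<Rightarrow> qstate" where
  "final_state n P x y =
     exec_rounds (nqubits P) (rounds P) (alice_init P) (init_state n x y)"

definition prob_one :: "nat \<Rightarrow> qprotocol \<Rightarrow> (nat \<Rightarrow> bool) \<Rightarrow> (nat \<Rightarrow> bool) \<Rightarrow> real" where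
  "prob_one n P x y =
     (\<Sum>b\<in>{b\<in>Pow {0..<nqubits P}. out_qubit P \<in> b}. (cmod (final_state n P x y b))\<^sup>2)"

text \<open>P computes f on n-bit inputs with error at most 1/3 on every input
  (only bits 0..<n of x and y are inputs).\<close>
definition computes :: "nat \<Rightarrow> ((nat \<Rightarrow> bool) \<Rightarrow> (nat \<Rightarrow> bool) \<Rightarrow> bool) \<Rightarrow> qprotocol \<Rightarrow> bool" where
  "computes n f P \<longleftrightarrow> wf_protocol n P \<and>
     (\<forall>x y. if f x y then prob_one n P x y \<ge> 2/3 else prob_one n P x y \<le> 1/3)"

definition BQC :: "nat \<Rightarrow> ((nat \<Rightarrow> bool) \<Rightarrow> (nat \<Rightarrow> bool) \<Rightarrow> bool) \<Rightarrow> nat" where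
  "BQC n f = (LEAST c. \<exists>P. computes n f P \<and> length (rounds P) = c)"

definition MAJ :: "nat \<Rightarrow> (nat \<Rightarrow> bool) \<Rightarrow> (nat \<Rightarrow> bool) \<Rightarrow> bool" where
  "MAJ n x y \<longleftrightarrow> 2 * card {i. i < n \<and> x i \<and> y i} \<ge> n"

end

(*
  The discrepancy method. After c qubits of communication the joint state is a sum of 2^c tensor
  products of vectors of norm at most 1, Alice's factor depending only on x and Bob's only on y
  (Yao, Kremer). Hence the acceptance probability, as a matrix indexed by the inputs, has
  factorization norm nu <= 2 * 4^c (Linial and Shraibman). Since nu is submultiplicative, the
  majority vote of 2r runs is a matrix of norm at most 4^r (1 + 2 * 4^c)^(2r) that errs by at most
  (8/9)^r.

  Padding reduces the thresholds [t <= |I inter J|] on m = 2h <= n/2 bits to MAJ_n, and the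
  alternating sum of these thresholds over t is the inner-product matrix (-1)^|I inter J|. A matrix
  approximating it entrywise within 1/2 has correlation at least 4^m / 2 with it, whereas Lindsey's
  lemma bounds this correlation by nu * 2^(3m/2). Therefore 2^h <= 2 + 8h 4^r (1 + 2 * 4^c)^(2r),
  and h = n/4, r = O(log n) give c = Omega(n / log n).
*)

theory Submission
  imports Defs "HOL-Real_Asymp.Real_Asymp"
begin

section \<open>Unitary evolution preserves the norm\<close>

lemma sum_lessThan_double: "(\<Sum>j<2 * K. f j) = (\<Sum>k<K. f (2 * k) + f (2 * k + 1))" for K :: nat
  by (induction K) (simp_all add: add_ac)

lemma sum_Pow_split:
  assumes "finite M" "A \<subseteq> M"
  shows "(\<Sum>b\<in>Pow M. g b) = (\<Sum>a\<in>Pow A. \<Sum>d\<in>Pow (M - A). g (a \<union> d))"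
proof -
  have "(\<Sum>b\<in>Pow M. g b) = (\<Sum>(a, d)\<in>Pow A \<times> Pow (M - A). g (a \<union> d))"
    by (rule sum.reindex_bij_witness[where i = "\<lambda>(a, d). a \<union> d" and j = "\<lambda>b. (b \<inter> A, b - A)"])
      (use assms in \<open>auto simp: Int_Diff_Un\<close>)
  then show ?thesis
    by (simp add: sum.cartesian_product)
qed

lemma sum_Pow_insert:
  assumes "finite S" "q \<notin> S"
  shows "(\<Sum>b\<in>Pow (insert q S). g b) = (\<Sum>a\<in>Pow S. g a + g (insert q a))"
proof -
  have "insert q S - S = {q}" "Pow {q} = {{}, {q}}"
    using assms(2) by auto
  moreover have "(\<Sum>b\<in>Pow (insert q S). g b) = (\<Sum>a\<in>Pow S. \<Sum>d\<in>Pow (insert q S - S). g (a \<union> d))"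
    using assms(1) by (intro sum_Pow_split) auto
  ultimately show ?thesis
    by simp
qed

lemma unitary_on_norm_preserving:
  assumes "unitary_on S U" "finite S"
  shows "(\<Sum>a\<in>Pow S. (cmod (\<Sum>c\<in>Pow S. U a c * v c))\<^sup>2) = (\<Sum>c\<in>Pow S. (cmod (v c))\<^sup>2)"
proof -
  have orth: "(\<Sum>a\<in>Pow S. U a c * cnj (U a c')) = (if c = c' then 1 else 0)"
    if "c \<in> Pow S" "c' \<in> Pow S" for c c'
    using assms(1) that unfolding unitary_on_def by (auto simp: mult.commute)
  have "complex_of_real (\<Sum>a\<in>Pow S. (cmod (\<Sum>c\<in>Pow S. U a c * v c))\<^sup>2)
      = (\<Sum>a\<in>Pow S. \<Sum>c\<in>Pow S. \<Sum>c'\<in>Pow S. v c * cnj (v c') * (U a c * cnj (U a c')))"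
    by (simp only: of_real_sum complex_norm_square) (simp add: sum_product mult_ac)
  also have "\<dots> = (\<Sum>c\<in>Pow S. \<Sum>c'\<in>Pow S. \<Sum>a\<in>Pow S. v c * cnj (v c') * (U a c * cnj (U a c')))"
    by (rule trans[OF sum.swap sum.cong[OF refl sum.swap]])
  also have "\<dots> = (\<Sum>c\<in>Pow S. \<Sum>c'\<in>Pow S. v c * cnj (v c') * (\<Sum>a\<in>Pow S. U a c * cnj (U a c')))"
    by (simp only: sum_distrib_left)
  also have "\<dots> = (\<Sum>c\<in>Pow S. \<Sum>c'\<in>Pow S. if c = c' then v c * cnj (v c') else 0)"
    by (intro sum.cong refl) (simp add: orth)
  also have "\<dots> = (\<Sum>c\<in>Pow S. v c * cnj (v c))"
    using assms(2) by simp
  also have "\<dots> = complex_of_real (\<Sum>c\<in>Pow S. (cmod (v c))\<^sup>2)"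
    by (simp only: of_real_sum complex_norm_square)
  finally show ?thesis
    using of_real_eq_iff by blast
qed

definition state_sq_norm :: "nat \<Rightarrow> qstate \<Rightarrow> real" where
  "state_sq_norm N \<psi> = (\<Sum>b\<in>Pow {0..<N}. (cmod (\<psi> b))\<^sup>2)"

lemma apply_op_Un:
  assumes "a \<subseteq> S" "d \<inter> S = {}"
  shows "apply_op S U \<psi> (a \<union> d) = (\<Sum>c\<in>Pow S. U a c * \<psi> (c \<union> d))"
proof -
  have "(a \<union> d) \<inter> S = a" "(a \<union> d) - S = d"
    using assms by auto
  then show ?thesis
    unfolding apply_op_def by simp
qed

lemma state_sq_norm_apply_op:
  assumes "S \<subseteq> {0..<N}" "unitary_on S U"
  shows "state_sq_norm N (apply_op S U \<psi>) = state_sq_norm N \<psi>"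
proof -
  let ?D = "Pow ({0..<N} - S)"
  have fin: "finite S"
    using assms(1) finite_subset by blast
  have "state_sq_norm N (apply_op S U \<psi>) = (\<Sum>a\<in>Pow S. \<Sum>d\<in>?D. (cmod (apply_op S U \<psi> (a \<union> d)))\<^sup>2)"
    unfolding state_sq_norm_def using assms(1) by (intro sum_Pow_split) auto
  also have "\<dots> = (\<Sum>d\<in>?D. \<Sum>a\<in>Pow S. (cmod (\<Sum>c\<in>Pow S. U a c * \<psi> (c \<union> d)))\<^sup>2)"
    by (subst sum.swap) (intro sum.cong refl, subst apply_op_Un, auto)
  also have "\<dots> = (\<Sum>d\<in>?D. \<Sum>c\<in>Pow S. (cmod (\<psi> (c \<union> d)))\<^sup>2)"
    by (intro sum.cong refl unitary_on_norm_preserving[OF assms(2) fin])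
  also have "\<dots> = state_sq_norm N \<psi>"
    unfolding state_sq_norm_def using assms(1) by (subst sum.swap) (intro sum_Pow_split[symmetric], auto)
  finally show ?thesis .
qed

lemma speaker_qubits_subset: "speaker_qubits N w A \<subseteq> {0..<N}" if "A \<subseteq> {0..<N}"
  using that by auto

lemma next_owner_subset: "next_owner w q A \<subseteq> {0..<N}"
  if "A \<subseteq> {0..<N}" "q \<in> speaker_qubits N w A"
  using that by (cases w) auto

lemma state_sq_norm_exec_rounds:
  "valid_rounds N rs A \<Longrightarrow> A \<subseteq> {0..<N} \<Longrightarrow> state_sq_norm N (exec_rounds N rs A \<psi>) = state_sq_norm N \<psi>"
proof (induction rs arbitrary: A \<psi>)
  case Nil
  then show ?case by simp
next
  case (Cons r rs)
  obtain w U q where r: "r = (w, U, q)"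
    by (cases r) auto
  with Cons.prems have q: "q \<in> speaker_qubits N w A"
    and U: "unitary_on (speaker_qubits N w A) U" and rs: "valid_rounds N rs (next_owner w q A)"
    by auto
  have "state_sq_norm N (exec_rounds N (r # rs) A \<psi>)
      = state_sq_norm N (apply_op (speaker_qubits N w A) U \<psi>)"
    using Cons.IH[OF rs next_owner_subset[OF Cons.prems(2) q]] r by simp
  also have "\<dots> = state_sq_norm N \<psi>"
    by (rule state_sq_norm_apply_op[OF speaker_qubits_subset[OF Cons.prems(2)] U])
  finally show ?case .
qed

lemma state_sq_norm_init_state:
  assumes "2 * n \<le> N"
  shows "state_sq_norm N (init_state n x y) = 1"
proof -
  have "{i. i < n \<and> x i} \<union> {n + i |i. i < n \<and> y i} \<in> Pow {0..<N}"
    using assms by auto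
  then show ?thesis
    unfolding state_sq_norm_def init_state_def
    by (simp add: if_distrib[of "\<lambda>z. (cmod z)\<^sup>2"] cong: if_cong)
qed

lemma prob_one_nonneg: "0 \<le> prob_one n P x y"
  unfolding prob_one_def by (rule sum_nonneg) simp

lemma prob_one_le_1:
  assumes "wf_protocol n P"
  shows "prob_one n P x y \<le> 1"
proof -
  have "prob_one n P x y \<le> state_sq_norm (nqubits P) (final_state n P x y)"
    unfolding prob_one_def state_sq_norm_def by (rule sum_mono2) auto
  also have "\<dots> = 1"
    using assms unfolding final_state_def wf_protocol_def
    by (simp add: state_sq_norm_exec_rounds state_sq_norm_init_state)
  finally show ?thesis .
qed

section \<open>The joint state as a sum of product states\<close>

definition product_expansion :: "nat \<Rightarrow> nat set \<Rightarrow> nat \<Rightarrow> ('x \<Rightarrow> 'y \<Rightarrow> qstate) \<Rightarrow> bool" where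
  "product_expansion N A K \<Psi> \<longleftrightarrow> (\<exists>\<alpha> \<beta>.
     (\<forall>x y b. b \<subseteq> {0..<N} \<longrightarrow> \<Psi> x y b = (\<Sum>k<K. \<alpha> x k (b \<inter> A) * \<beta> y k (b - A)))
   \<and> (\<forall>x k. k < K \<longrightarrow> (\<Sum>a\<in>Pow A. (cmod (\<alpha> x k a))\<^sup>2) \<le> 1)
   \<and> (\<forall>y k. k < K \<longrightarrow> (\<Sum>d\<in>Pow ({0..<N} - A). (cmod (\<beta> y k d))\<^sup>2) \<le> 1))"

lemma product_expansionI:
  assumes "\<And>x y b. b \<subseteq> {0..<N} \<Longrightarrow> \<Psi> x y b = (\<Sum>k<K. \<alpha> x k (b \<inter> A) * \<beta> y k (b - A))"
    and "\<And>x k. k < K \<Longrightarrow> (\<Sum>a\<in>Pow A. (cmod (\<alpha> x k a))\<^sup>2) \<le> 1"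
    and "\<And>y k. k < K \<Longrightarrow> (\<Sum>d\<in>Pow ({0..<N} - A). (cmod (\<beta> y k d))\<^sup>2) \<le> 1"
  shows "product_expansion N A K \<Psi>"
  unfolding product_expansion_def using assms by blast

lemma product_expansionE:
  assumes "product_expansion N A K \<Psi>"
  obtains \<alpha> \<beta>
  where "\<And>x y b. b \<subseteq> {0..<N} \<Longrightarrow> \<Psi> x y b = (\<Sum>k<K. \<alpha> x k (b \<inter> A) * \<beta> y k (b - A))"
    and "\<And>x k. k < K \<Longrightarrow> (\<Sum>a\<in>Pow A. (cmod (\<alpha> x k a))\<^sup>2) \<le> 1"
    and "\<And>y k. k < K \<Longrightarrow> (\<Sum>d\<in>Pow ({0..<N} - A). (cmod (\<beta> y k d))\<^sup>2) \<le> 1"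
  using assms unfolding product_expansion_def by blast

lemma product_expansion_swap:
  assumes "A \<subseteq> {0..<N}" "product_expansion N A K \<Psi>"
  shows "product_expansion N ({0..<N} - A) K (\<lambda>y x. \<Psi> x y)"
proof -
  obtain \<alpha> \<beta> where rep: "\<And>x y b. b \<subseteq> {0..<N} \<Longrightarrow> \<Psi> x y b = (\<Sum>k<K. \<alpha> x k (b \<inter> A) * \<beta> y k (b - A))"
    and "\<And>x k. k < K \<Longrightarrow> (\<Sum>a\<in>Pow A. (cmod (\<alpha> x k a))\<^sup>2) \<le> 1"
    and "\<And>y k. k < K \<Longrightarrow> (\<Sum>d\<in>Pow ({0..<N} - A). (cmod (\<beta> y k d))\<^sup>2) \<le> 1"
    using assms(2) by (rule product_expansionE) (rule that)
  moreover have "b \<inter> ({0..<N} - A) = b - A" "b - ({0..<N} - A) = b \<inter> A" if "b \<subseteq> {0..<N}" for b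
    using that by auto
  moreover have "{0..<N} - ({0..<N} - A) = A"
    using assms(1) by auto
  ultimately show ?thesis
    by (intro product_expansionI[where \<alpha> = \<beta> and \<beta> = \<alpha>]) (auto simp: mult.commute)
qed

lemma product_expansion_apply_op:
  assumes "A \<subseteq> {0..<N}" "unitary_on A U" "product_expansion N A K \<Psi>"
  shows "product_expansion N A K (\<lambda>x y. apply_op A U (\<Psi> x y))"
proof -
  obtain \<alpha> \<beta> where rep: "\<And>x y b. b \<subseteq> {0..<N} \<Longrightarrow> \<Psi> x y b = (\<Sum>k<K. \<alpha> x k (b \<inter> A) * \<beta> y k (b - A))"
    and na: "\<And>x k. k < K \<Longrightarrow> (\<Sum>a\<in>Pow A. (cmod (\<alpha> x k a))\<^sup>2) \<le> 1"
    and nb: "\<And>y k. k < K \<Longrightarrow> (\<Sum>d\<in>Pow ({0..<N} - A). (cmod (\<beta> y k d))\<^sup>2) \<le> 1"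
    using assms(3) by (rule product_expansionE) (rule that)
  define \<alpha>' where "\<alpha>' x k a = (\<Sum>c\<in>Pow A. U a c * \<alpha> x k c)" for x k a
  show ?thesis
  proof (rule product_expansionI[where \<alpha> = \<alpha>' and \<beta> = \<beta>])
    fix x y b
    assume b: "b \<subseteq> {0..<N}"
    have "apply_op A U (\<Psi> x y) b = (\<Sum>c\<in>Pow A. U (b \<inter> A) c * (\<Sum>k<K. \<alpha> x k c * \<beta> y k (b - A)))"
      unfolding apply_op_def
    proof (intro sum.cong refl)
      fix c
      assume c: "c \<in> Pow A"
      then have "c \<union> (b - A) \<subseteq> {0..<N}" "(c \<union> (b - A)) \<inter> A = c" "(c \<union> (b - A)) - A = b - A"
        using b assms(1) by auto
      then show "U (b \<inter> A) c * \<Psi> x y (c \<union> (b - A)) = U (b \<inter> A) c * (\<Sum>k<K. \<alpha> x k c * \<beta> y k (b - A))"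
        using rep by simp
    qed
    also have "\<dots> = (\<Sum>k<K. \<alpha>' x k (b \<inter> A) * \<beta> y k (b - A))"
      unfolding \<alpha>'_def by (simp add: sum_distrib_left sum_distrib_right mult_ac) (rule sum.swap)
    finally show "apply_op A U (\<Psi> x y) b = (\<Sum>k<K. \<alpha>' x k (b \<inter> A) * \<beta> y k (b - A))" .
  next
    fix x k
    assume "k < K"
    moreover have "finite A"
      using assms(1) finite_subset by blast
    ultimately show "(\<Sum>a\<in>Pow A. (cmod (\<alpha>' x k a))\<^sup>2) \<le> 1"
      unfolding \<alpha>'_def using unitary_on_norm_preserving[OF assms(2)] na by simp
  qed (rule nb)
qed

lemma sum_sq_cmod_Pow_fix_le:
  assumes "finite A" "q \<in> A"
  shows "(\<Sum>a\<in>Pow (A - {q}). (cmod (f (if e then insert q a else a)))\<^sup>2) \<le> (\<Sum>a\<in>Pow A. (cmod (f a))\<^sup>2)"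
proof -
  have "(\<Sum>a\<in>Pow (A - {q}). (cmod (f (if e then insert q a else a)))\<^sup>2)
      \<le> (\<Sum>a\<in>Pow (A - {q}). (cmod (f a))\<^sup>2 + (cmod (f (insert q a)))\<^sup>2)"
    by (intro sum_mono) auto
  also have "\<dots> = (\<Sum>a\<in>Pow A. (cmod (f a))\<^sup>2)"
    using sum_Pow_insert[of "A - {q}" q "\<lambda>a. (cmod (f a))\<^sup>2"] assms by (simp add: insert_absorb)
  finally show ?thesis .
qed

lemma sum_sq_cmod_Pow_insert_select:
  assumes "finite B" "q \<notin> B"
  shows "(\<Sum>d\<in>Pow (insert q B). (cmod (if (q \<in> d) = e then g (d - {q}) else 0))\<^sup>2) = (\<Sum>d\<in>Pow B. (cmod (g d))\<^sup>2)"
  unfolding sum_Pow_insert[OF assms]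
proof (intro sum.cong refl)
  fix d
  assume "d \<in> Pow B"
  then have "q \<notin> d" "insert q d - {q} = d"
    using assms(2) by auto
  then show "(cmod (if (q \<in> d) = e then g (d - {q}) else 0))\<^sup>2
      + (cmod (if (q \<in> insert q d) = e then g (insert q d - {q}) else 0))\<^sup>2 = (cmod (g d))\<^sup>2"
    by (cases e) simp_all
qed

lemma product_expansion_send:
  assumes "A \<subseteq> {0..<N}" "q \<in> A" "product_expansion N A K \<Psi>"
  shows "product_expansion N (A - {q}) (2 * K) \<Psi>"
proof -
  obtain \<alpha> \<beta> where rep: "\<And>x y b. b \<subseteq> {0..<N} \<Longrightarrow> \<Psi> x y b = (\<Sum>k<K. \<alpha> x k (b \<inter> A) * \<beta> y k (b - A))"
    and na: "\<And>x k. k < K \<Longrightarrow> (\<Sum>a\<in>Pow A. (cmod (\<alpha> x k a))\<^sup>2) \<le> 1"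
    and nb: "\<And>y k. k < K \<Longrightarrow> (\<Sum>d\<in>Pow ({0..<N} - A). (cmod (\<beta> y k d))\<^sup>2) \<le> 1"
    using assms(3) by (rule product_expansionE) (rule that)
  let ?A = "A - {q}" and ?B = "{0..<N} - A"
  have A: "finite A"
    using assms(1) finite_subset by auto
  have B: "{0..<N} - ?A = insert q ?B" "q \<notin> ?B" "finite ?B"
    using assms(1,2) by auto
  \<comment> \<open>Term \<open>2 * k + e\<close> of the new expansion is term \<open>k\<close> restricted to the value \<open>e\<close> of qubit \<open>q\<close>.\<close>
  define \<alpha>' where "\<alpha>' x j a = \<alpha> x (j div 2) (if odd j then insert q a else a)" for x j a
  define \<beta>' where "\<beta>' y j d = (if (q \<in> d) = odd j then \<beta> y (j div 2) (d - {q}) else 0)" for y j d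
  show ?thesis
  proof (rule product_expansionI[where \<alpha> = \<alpha>' and \<beta> = \<beta>'])
    fix x y b
    assume b: "b \<subseteq> {0..<N}"
    have "\<alpha>' x (2 * k) (b \<inter> ?A) * \<beta>' y (2 * k) (b - ?A)
        + \<alpha>' x (2 * k + 1) (b \<inter> ?A) * \<beta>' y (2 * k + 1) (b - ?A)
        = \<alpha> x k (b \<inter> A) * \<beta> y k (b - A)" for k
    proof (cases "q \<in> b")
      case True
      then have "insert q (b \<inter> ?A) = b \<inter> A" "(b - ?A) - {q} = b - A"
        using assms(2) by auto
      with True show ?thesis
        unfolding \<alpha>'_def \<beta>'_def by simp
    next
      case False
      then have "b \<inter> ?A = b \<inter> A" "(b - ?A) - {q} = b - A"
        by auto
      with False show ?thesis
        unfolding \<alpha>'_def \<beta>'_def by simp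
    qed
    then show "\<Psi> x y b = (\<Sum>j<2 * K. \<alpha>' x j (b \<inter> ?A) * \<beta>' y j (b - ?A))"
      by (simp add: sum_lessThan_double rep[OF b])
  next
    fix x j
    assume "j < 2 * K"
    then have "j div 2 < K"
      by simp
    then show "(\<Sum>a\<in>Pow ?A. (cmod (\<alpha>' x j a))\<^sup>2) \<le> 1"
      unfolding \<alpha>'_def by (rule order_trans[OF sum_sq_cmod_Pow_fix_le[OF A assms(2)] na])
  next
    fix y j
    assume "j < 2 * K"
    then show "(\<Sum>d\<in>Pow ({0..<N} - ?A). (cmod (\<beta>' y j d))\<^sup>2) \<le> 1"
      unfolding \<beta>'_def B(1) sum_sq_cmod_Pow_insert_select[OF B(3,2)] using nb by simp
  qed
qed

lemma product_expansion_round: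
  assumes "A \<subseteq> {0..<N}" "q \<in> speaker_qubits N w A" "unitary_on (speaker_qubits N w A) U"
    and "product_expansion N A K \<Psi>"
  shows "product_expansion N (next_owner w q A) (2 * K) (\<lambda>x y. apply_op (speaker_qubits N w A) U (\<Psi> x y))"
proof (cases w)
  case True
  with assms show ?thesis
    by (simp add: product_expansion_send product_expansion_apply_op)
next
  case False
  let ?B = "{0..<N} - A"
  have "product_expansion N (?B - {q}) (2 * K) (\<lambda>y x. apply_op ?B U (\<Psi> x y))"
    using False assms by (intro product_expansion_send product_expansion_apply_op product_expansion_swap) auto
  then have "product_expansion N ({0..<N} - (?B - {q})) (2 * K) (\<lambda>x y. apply_op ?B U (\<Psi> x y))"
    by (rule product_expansion_swap[rotated]) auto
  moreover have "{0..<N} - (?B - {q}) = insert q A"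
    using assms(1,2) False by auto
  ultimately show ?thesis
    using False by simp
qed

lemma product_expansion_exec_rounds:
  "valid_rounds N rs A \<Longrightarrow> A \<subseteq> {0..<N} \<Longrightarrow> product_expansion N A K \<Psi> \<Longrightarrow>
   \<exists>A'. A' \<subseteq> {0..<N} \<and> product_expansion N A' (K * 2 ^ length rs) (\<lambda>x y. exec_rounds N rs A (\<Psi> x y))"
proof (induction rs arbitrary: A K \<Psi>)
  case Nil
  then show ?case by auto
next
  case (Cons r rs)
  obtain w U q where r: "r = (w, U, q)"
    by (cases r) auto
  with Cons.prems have q: "q \<in> speaker_qubits N w A"
    and U: "unitary_on (speaker_qubits N w A) U" and rs: "valid_rounds N rs (next_owner w q A)"
    by auto
  from Cons.IH[OF rs next_owner_subset[OF Cons.prems(2) q] product_expansion_round[OF Cons.prems(2) q U Cons.prems(3)]]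
  show ?case
    using r by (simp add: mult_ac)
qed

lemma product_expansion_init_state:
  assumes "wf_protocol n P"
  shows "product_expansion (nqubits P) (alice_init P) 1 (init_state n)"
proof -
  let ?A = "alice_init P"
  define X where "X x = {i. i < n \<and> x i}" for x :: "nat \<Rightarrow> bool"
  define Y where "Y y = {n + i |i. i < n \<and> y i}" for y :: "nat \<Rightarrow> bool"
  have "X x \<subseteq> {0..<n}" "Y y \<subseteq> {n..<2 * n}" for x y
    unfolding X_def Y_def by auto
  then have "X x \<subseteq> ?A" "Y y \<inter> ?A = {}" for x y
    using assms unfolding wf_protocol_def by blast+
  then have split: "init_state n x y b = (if b \<inter> ?A = X x \<and> b - ?A = Y y then 1 else 0)" for x y b
    unfolding init_state_def X_def[symmetric] Y_def[symmetric] by (intro if_cong) blast+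
  have "finite ?A"
    using assms unfolding wf_protocol_def by (meson finite_atLeastLessThan finite_subset)
  then show ?thesis
    by (intro product_expansionI[where \<alpha> = "\<lambda>x k a. if a = X x then 1 else 0"
          and \<beta> = "\<lambda>y k d. if d = Y y then 1 else 0"])
      (simp_all add: split if_distrib[of "\<lambda>z. (cmod z)\<^sup>2"] cong: if_cong)
qed

lemma final_state_product_expansion:
  assumes "wf_protocol n P"
  obtains A where "A \<subseteq> {0..<nqubits P}"
    and "product_expansion (nqubits P) A (2 ^ length (rounds P)) (final_state n P)"
proof -
  have "valid_rounds (nqubits P) (rounds P) (alice_init P)" "alice_init P \<subseteq> {0..<nqubits P}"
    using assms unfolding wf_protocol_def by auto
  from product_expansion_exec_rounds[OF this product_expansion_init_state[OF assms]]
  show thesis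
    using that unfolding final_state_def by auto
qed

section \<open>The factorization norm\<close>

text \<open>\<open>nu_le a M\<close> expresses \<open>\<nu>(M) \<le> a\<close> for the factorization norm \<open>\<nu>\<close> of Linial and Shraibman.\<close>

inductive nu_le :: "real \<Rightarrow> ('x \<Rightarrow> 'y \<Rightarrow> real) \<Rightarrow> bool" where
  rank_one: "(\<And>x. \<bar>f x\<bar> \<le> 1) \<Longrightarrow> (\<And>y. \<bar>g y\<bar> \<le> 1) \<Longrightarrow> nu_le 1 (\<lambda>x y. f x * g y)"
| add: "nu_le a M \<Longrightarrow> nu_le b M' \<Longrightarrow> nu_le (a + b) (\<lambda>x y. M x y + M' x y)"
| scale: "nu_le a M \<Longrightarrow> nu_le (\<bar>c\<bar> * a) (\<lambda>x y. c * M x y)"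
| mono: "nu_le a M \<Longrightarrow> a \<le> b \<Longrightarrow> nu_le b M"

lemma nu_le_cong: "nu_le a M \<Longrightarrow> (\<And>x y. M x y = M' x y) \<Longrightarrow> nu_le a M'"
  by (metis ext)

lemma nu_le_nonneg: "nu_le a M \<Longrightarrow> 0 \<le> a"
  by (induction rule: nu_le.induct) auto

lemma nu_le_one: "nu_le 1 (\<lambda>x y. 1)"
  using nu_le.rank_one[of "\<lambda>x. 1" "\<lambda>y. 1"] by simp

lemma nu_le_zero: "nu_le 0 (\<lambda>x y. 0)"
  using nu_le.scale[OF nu_le_one, of 0] by simp

lemma nu_le_sum:
  "finite I \<Longrightarrow> (\<And>i. i \<in> I \<Longrightarrow> nu_le (a i) (M i)) \<Longrightarrow> nu_le (\<Sum>i\<in>I. a i) (\<lambda>x y. \<Sum>i\<in>I. M i x y)"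
proof (induction I rule: finite_induct)
  case empty
  then show ?case
    using nu_le_zero by simp
next
  case (insert i I)
  then show ?case
    using nu_le.add[of "a i" "M i" "sum a I" "\<lambda>x y. \<Sum>i\<in>I. M i x y"] by simp
qed

lemma nu_le_scale_le_1:
  assumes "nu_le a M" "\<bar>c\<bar> \<le> 1"
  shows "nu_le a (\<lambda>x y. c * M x y)"
proof -
  have "\<bar>c\<bar> * a \<le> a"
    using nu_le_nonneg[OF assms(1)] assms(2) by (simp add: mult_left_le_one_le)
  then show ?thesis
    using nu_le.mono[OF nu_le.scale[OF assms(1)]] by blast
qed

lemma nu_le_one_minus: "nu_le a M \<Longrightarrow> nu_le (1 + a) (\<lambda>x y. 1 - M x y)"
  using nu_le.add[OF nu_le_one nu_le.scale[of a M "-1"]] by simp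

lemma nu_le_mult_rank_one:
  assumes "nu_le b M" "\<And>x. \<bar>f x\<bar> \<le> 1" "\<And>y. \<bar>g y\<bar> \<le> 1"
  shows "nu_le b (\<lambda>x y. f x * g y * M x y)"
  using assms(1)
proof (induction rule: nu_le.induct)
  case (rank_one f' g')
  have "nu_le 1 (\<lambda>x y. (f x * f' x) * (g y * g' y))"
    by (rule nu_le.rank_one) (use assms(2,3) rank_one in \<open>auto simp: abs_mult intro: mult_le_one\<close>)
  then show ?case
    by (rule nu_le_cong) (simp add: mult_ac)
next
  case (add a M b M')
  then show ?case
    using nu_le.add[OF add.IH] by (auto intro: nu_le_cong simp: algebra_simps)
next
  case (scale a M c)
  then show ?case
    using nu_le.scale[OF scale.IH, of c] by (auto intro: nu_le_cong simp: algebra_simps)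
qed (rule nu_le.mono)

lemma nu_le_mult:
  assumes "nu_le a M" "nu_le b M'"
  shows "nu_le (a * b) (\<lambda>x y. M x y * M' x y)"
  using assms(1)
proof (induction rule: nu_le.induct)
  case (rank_one f g)
  then show ?case
    using nu_le_mult_rank_one[OF assms(2), of f g] by simp
next
  case (add a1 M1 a2 M2)
  then show ?case
    using nu_le.add[OF add.IH] by (auto intro: nu_le_cong simp: algebra_simps)
next
  case (scale a M c)
  then show ?case
    using nu_le.scale[OF scale.IH, of c] by (auto intro: nu_le_cong simp: algebra_simps)
next
  case (mono a M a')
  then show ?case
    using nu_le.mono[OF mono.IH] nu_le_nonneg[OF assms(2)] by (simp add: mult_right_mono)
qed

lemma nu_le_power: "nu_le a M \<Longrightarrow> nu_le (a ^ j) (\<lambda>x y. M x y ^ j)"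
  by (induction j) (simp_all add: nu_le_one nu_le_mult)

section \<open>Acceptance probabilities have small factorization norm\<close>

lemma norm_sum_mult_cnj_le_1:
  fixes u v :: "'a \<Rightarrow> complex"
  assumes "finite T" "S \<subseteq> T" "(\<Sum>a\<in>T. (cmod (u a))\<^sup>2) \<le> 1" "(\<Sum>a\<in>T. (cmod (v a))\<^sup>2) \<le> 1"
  shows "cmod (\<Sum>a\<in>S. u a * cnj (v a)) \<le> 1"
proof -
  have "cmod (\<Sum>a\<in>S. u a * cnj (v a)) \<le> (\<Sum>a\<in>S. cmod (u a) * cmod (v a))"
    by (rule order_trans[OF norm_sum]) (simp add: norm_mult)
  also have "\<dots> \<le> (\<Sum>a\<in>S. ((cmod (u a))\<^sup>2 + (cmod (v a))\<^sup>2) / 2)"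
  proof (rule sum_mono)
    fix a
    show "cmod (u a) * cmod (v a) \<le> ((cmod (u a))\<^sup>2 + (cmod (v a))\<^sup>2) / 2"
      using sum_squares_bound[of "cmod (u a)" "cmod (v a)"] by simp
  qed
  also have "\<dots> \<le> (\<Sum>a\<in>T. ((cmod (u a))\<^sup>2 + (cmod (v a))\<^sup>2) / 2)"
    using assms(1,2) by (intro sum_mono2) auto
  also have "\<dots> \<le> 1"
    using assms(3,4) by (simp add: sum.distrib sum_divide_distrib[symmetric])
  finally show ?thesis .
qed

lemma prob_sum_product_expansion:
  fixes \<alpha> \<beta> :: "nat \<Rightarrow> nat set \<Rightarrow> complex" and q :: nat
  assumes A: "A \<subseteq> {0..<N}"
    and rep: "\<And>b. b \<subseteq> {0..<N} \<Longrightarrow> \<psi> b = (\<Sum>k<K. \<alpha> k (b \<inter> A) * \<beta> k (b - A))"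
  defines "SA \<equiv> {a \<in> Pow A. q \<in> A \<longrightarrow> q \<in> a}" and "SB \<equiv> {d \<in> Pow ({0..<N} - A). q \<notin> A \<longrightarrow> q \<in> d}"
  shows "complex_of_real (\<Sum>b\<in>{b\<in>Pow {0..<N}. q \<in> b}. (cmod (\<psi> b))\<^sup>2)
    = (\<Sum>k<K. \<Sum>k'<K. (\<Sum>a\<in>SA. \<alpha> k a * cnj (\<alpha> k' a)) * (\<Sum>d\<in>SB. \<beta> k d * cnj (\<beta> k' d)))"
proof -
  have swap: "(\<Sum>i\<in>I. \<Sum>k<K. \<Sum>k'<K. f i k k') = (\<Sum>k<K. \<Sum>k'<K. \<Sum>i\<in>I. f i k k')"
    for I :: "nat set set" and f :: "nat set \<Rightarrow> nat \<Rightarrow> nat \<Rightarrow> complex"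
    by (rule trans[OF sum.swap sum.cong[OF refl sum.swap]])
  have "complex_of_real (\<Sum>b\<in>{b\<in>Pow {0..<N}. q \<in> b}. (cmod (\<psi> b))\<^sup>2)
      = (\<Sum>(a, d)\<in>SA \<times> SB. \<psi> (a \<union> d) * cnj (\<psi> (a \<union> d)))"
    unfolding of_real_sum complex_norm_square
    by (rule sum.reindex_bij_witness[where i = "\<lambda>(a, d). a \<union> d" and j = "\<lambda>b. (b \<inter> A, b - A)"])
      (use A in \<open>auto simp: SA_def SB_def Int_Diff_Un\<close>)
  also have "\<dots> = (\<Sum>a\<in>SA. \<Sum>d\<in>SB. \<Sum>k<K. \<Sum>k'<K. (\<alpha> k a * cnj (\<alpha> k' a)) * (\<beta> k d * cnj (\<beta> k' d)))"
    unfolding sum.cartesian_product[symmetric]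
  proof (intro sum.cong refl)
    fix a d
    assume "a \<in> SA" "d \<in> SB"
    then have "a \<union> d \<subseteq> {0..<N}" "(a \<union> d) \<inter> A = a" "(a \<union> d) - A = d"
      using A by (auto simp: SA_def SB_def)
    then show "\<psi> (a \<union> d) * cnj (\<psi> (a \<union> d))
        = (\<Sum>k<K. \<Sum>k'<K. (\<alpha> k a * cnj (\<alpha> k' a)) * (\<beta> k d * cnj (\<beta> k' d)))"
      using rep by (simp add: sum_product mult_ac)
  qed
  also have "\<dots> = (\<Sum>k<K. \<Sum>k'<K. \<Sum>a\<in>SA. \<Sum>d\<in>SB. (\<alpha> k a * cnj (\<alpha> k' a)) * (\<beta> k d * cnj (\<beta> k' d)))"
    by (simp only: swap)
  finally show ?thesis
    by (simp only: sum_product)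
qed

lemma nu_le_Re_sum_mult:
  fixes F :: "nat \<Rightarrow> nat \<Rightarrow> 'x \<Rightarrow> complex" and G :: "nat \<Rightarrow> nat \<Rightarrow> 'y \<Rightarrow> complex"
  assumes F: "\<And>k k' x. k < K \<Longrightarrow> k' < K \<Longrightarrow> cmod (F k k' x) \<le> 1"
    and G: "\<And>k k' y. k < K \<Longrightarrow> k' < K \<Longrightarrow> cmod (G k k' y) \<le> 1"
  shows "nu_le (2 * real K ^ 2) (\<lambda>x y. Re (\<Sum>k<K. \<Sum>k'<K. F k k' x * G k k' y))"
proof -
  have "nu_le (\<Sum>k<K. \<Sum>k'<K. 1 + 1)
      (\<lambda>x y. \<Sum>k<K. \<Sum>k'<K. Re (F k k' x) * Re (G k k' y) + (- Im (F k k' x)) * Im (G k k' y))"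
  proof (intro nu_le_sum finite_lessThan nu_le.add nu_le.rank_one)
    fix k k' x y
    assume "k \<in> {..<K}" "k' \<in> {..<K}"
    then have "cmod (F k k' x) \<le> 1" "cmod (G k k' y) \<le> 1"
      using F G by auto
    then show "\<bar>Re (F k k' x)\<bar> \<le> 1" "\<bar>Re (G k k' y)\<bar> \<le> 1" "\<bar>- Im (F k k' x)\<bar> \<le> 1" "\<bar>Im (G k k' y)\<bar> \<le> 1"
      using abs_Re_le_cmod abs_Im_le_cmod by (auto intro: order_trans)
  qed
  then show ?thesis
    by (rule nu_le_cong[THEN nu_le.mono]) (simp_all add: power2_eq_square)
qed

lemma nu_le_prob_one:
  assumes "wf_protocol n P"
  shows "nu_le (2 * 4 ^ length (rounds P)) (\<lambda>x y. prob_one n P (px x) (py y))"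
proof -
  let ?N = "nqubits P" and ?q = "out_qubit P"
  define K where "K = (2::nat) ^ length (rounds P)"
  obtain A where A: "A \<subseteq> {0..<?N}" and pe: "product_expansion ?N A K (final_state n P)"
    using final_state_product_expansion[OF assms] unfolding K_def .
  from pe obtain \<alpha> \<beta> where rep: "\<And>x y b. b \<subseteq> {0..<?N} \<Longrightarrow> final_state n P x y b = (\<Sum>k<K. \<alpha> x k (b \<inter> A) * \<beta> y k (b - A))"
    and na: "\<And>x k. k < K \<Longrightarrow> (\<Sum>a\<in>Pow A. (cmod (\<alpha> x k a))\<^sup>2) \<le> 1"
    and nb: "\<And>y k. k < K \<Longrightarrow> (\<Sum>d\<in>Pow ({0..<?N} - A). (cmod (\<beta> y k d))\<^sup>2) \<le> 1"
    by (rule product_expansionE) (rule that)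
  define F where "F k k' x = (\<Sum>a\<in>{a \<in> Pow A. ?q \<in> A \<longrightarrow> ?q \<in> a}. \<alpha> x k a * cnj (\<alpha> x k' a))" for k k' x
  define G where "G k k' y = (\<Sum>d\<in>{d \<in> Pow ({0..<?N} - A). ?q \<notin> A \<longrightarrow> ?q \<in> d}. \<beta> y k d * cnj (\<beta> y k' d))" for k k' y
  have "finite A"
    using A finite_subset by blast
  then have "cmod (F k k' x) \<le> 1" "cmod (G k k' y) \<le> 1" if "k < K" "k' < K" for k k' x y
    unfolding F_def G_def using that
    by (intro norm_sum_mult_cnj_le_1[OF _ _ na na] norm_sum_mult_cnj_le_1[OF _ _ nb nb]; auto)+
  then have "nu_le (2 * real K ^ 2) (\<lambda>x y. Re (\<Sum>k<K. \<Sum>k'<K. F k k' (px x) * G k k' (py y)))"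
    by (intro nu_le_Re_sum_mult[where F = "\<lambda>k k' x. F k k' (px x)" and G = "\<lambda>k k' y. G k k' (py y)"])
  moreover have "complex_of_real (prob_one n P x y) = (\<Sum>k<K. \<Sum>k'<K. F k k' x * G k k' y)" for x y
    unfolding prob_one_def F_def G_def
    by (rule prob_sum_product_expansion[where \<psi> = "final_state n P x y" and \<alpha> = "\<alpha> x" and \<beta> = "\<beta> y", OF A rep])
  then have "prob_one n P x y = Re (\<Sum>k<K. \<Sum>k'<K. F k k' x * G k k' y)" for x y
    by (metis Re_complex_of_real)
  moreover have "2 * real K ^ 2 = 2 * 4 ^ length (rounds P)"
    unfolding K_def by (simp add: power2_eq_square flip: power_mult_distrib)
  ultimately show ?thesis
    by (auto intro: nu_le_cong)
qed

section \<open>Discrepancy of the inner-product matrix\<close>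

definition hadamard :: "nat set \<Rightarrow> nat set \<Rightarrow> real" where
  "hadamard I J = (-1) ^ card (I \<inter> J)"

lemma hadamard_eq_prod: "finite J \<Longrightarrow> hadamard I J = (\<Prod>j\<in>J. if j \<in> I then -1 else 1)"
  by (simp add: hadamard_def prod.If_cases Int_commute)

lemma hadamard_commute: "hadamard I J = hadamard J I"
  by (simp add: hadamard_def Int_commute)

lemma hadamard_square: "hadamard I J * hadamard I J = 1"
  by (simp add: hadamard_def flip: power_mult_distrib)

lemma abs_hadamard: "\<bar>hadamard I J\<bar> = 1"
  by (simp add: hadamard_def)

lemma hadamard_orthogonal:
  assumes "finite M" "I \<subseteq> M" "I' \<subseteq> M"
  shows "(\<Sum>J\<in>Pow M. hadamard I J * hadamard I' J) = (if I = I' then 2 ^ card M else 0)"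
proof -
  define w where "w j = (if j \<in> I then -1 else 1) * (if j \<in> I' then -1 else (1::real))" for j
  have "(\<Sum>J\<in>Pow M. hadamard I J * hadamard I' J) = (\<Sum>J\<in>Pow M. (\<Prod>j\<in>J. w j) * (\<Prod>j\<in>M - J. 1))"
    using assms(1) by (intro sum.cong refl) (auto simp: hadamard_eq_prod w_def prod.distrib finite_subset)
  also have "\<dots> = (\<Prod>j\<in>M. w j + 1)"
    by (rule prod_add[OF assms(1), symmetric])
  also have "\<dots> = (if I = I' then 2 ^ card M else 0)"
  proof (cases "I = I'")
    case True
    then have "w j + 1 = 2" for j
      by (simp add: w_def)
    with True show ?thesis
      by simp
  next
    case False
    then obtain j where "j \<in> M" "(j \<in> I) \<noteq> (j \<in> I')"
      using assms(2,3) by blast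
    then have "\<exists>j\<in>M. w j + 1 = 0"
      by (auto simp: w_def)
    with False assms(1) show ?thesis
      by (simp add: prod_zero)
  qed
  finally show ?thesis .
qed

lemma hadamard_parseval:
  assumes "finite M"
  shows "(\<Sum>I\<in>Pow M. (\<Sum>J\<in>Pow M. hadamard I J * g J)\<^sup>2) = 2 ^ card M * (\<Sum>J\<in>Pow M. (g J)\<^sup>2)"
proof -
  let ?X = "Pow M"
  have "(\<Sum>I\<in>?X. (\<Sum>J\<in>?X. hadamard I J * g J)\<^sup>2)
      = (\<Sum>I\<in>?X. \<Sum>J\<in>?X. \<Sum>J'\<in>?X. g J * g J' * (hadamard J I * hadamard J' I))"
    by (simp add: power2_eq_square sum_product hadamard_commute mult_ac)
  also have "\<dots> = (\<Sum>J\<in>?X. \<Sum>J'\<in>?X. \<Sum>I\<in>?X. g J * g J' * (hadamard J I * hadamard J' I))"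
    by (rule trans[OF sum.swap sum.cong[OF refl sum.swap]])
  also have "\<dots> = (\<Sum>J\<in>?X. \<Sum>J'\<in>?X. if J = J' then 2 ^ card M * (g J)\<^sup>2 else 0)"
    using assms by (intro sum.cong refl) (simp add: sum_distrib_left[symmetric] hadamard_orthogonal power2_eq_square)
  also have "\<dots> = 2 ^ card M * (\<Sum>J\<in>Pow M. (g J)\<^sup>2)"
    using assms by (simp add: sum_distrib_left)
  finally show ?thesis .
qed

lemma abs_le_mean_square: "0 < t \<Longrightarrow> \<bar>v::real\<bar> \<le> (v\<^sup>2 / t + t) / 2"
  using sum_squares_bound[of "\<bar>v\<bar> / sqrt t" "sqrt t"]
  by (simp add: field_simps)

lemma hadamard_rank_one_correlation:
  fixes f g :: "nat set \<Rightarrow> real"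
  assumes f: "\<And>I. \<bar>f I\<bar> \<le> 1" and g: "\<And>J. \<bar>g J\<bar> \<le> 1"
  shows "\<bar>\<Sum>I\<in>Pow {..<2 * h}. \<Sum>J\<in>Pow {..<2 * h}. hadamard I J * (f I * g J)\<bar> \<le> 8 ^ h"
proof -
  let ?X = "Pow {..<2 * h}"
  define v where "v I = (\<Sum>J\<in>?X. hadamard I J * g J)" for I
  have card_X: "card ?X = 4 ^ h"
    by (simp add: card_Pow power_mult)
  have "(\<Sum>I\<in>?X. (v I)\<^sup>2) = 4 ^ h * (\<Sum>J\<in>?X. (g J)\<^sup>2)"
    unfolding v_def by (simp add: hadamard_parseval power_mult)
  also have "\<dots> \<le> 4 ^ h * (\<Sum>J\<in>?X. 1)"
    using g by (intro mult_left_mono sum_mono) (auto simp: abs_square_le_1)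
  finally have parseval: "(\<Sum>I\<in>?X. (v I)\<^sup>2) \<le> 16 ^ h"
    by (simp add: card_X flip: power_mult_distrib)
  have "\<bar>\<Sum>I\<in>?X. \<Sum>J\<in>?X. hadamard I J * (f I * g J)\<bar> = \<bar>\<Sum>I\<in>?X. f I * v I\<bar>"
    unfolding v_def by (simp add: sum_distrib_left mult_ac)
  also have "\<dots> \<le> (\<Sum>I\<in>?X. \<bar>v I\<bar>)"
    using f by (intro order_trans[OF sum_abs] sum_mono) (simp add: abs_mult mult_left_le_one_le)
  also have "\<dots> \<le> (\<Sum>I\<in>?X. ((v I)\<^sup>2 / 2 ^ h + 2 ^ h) / 2)"
    by (intro sum_mono abs_le_mean_square) simp
  also have "\<dots> = ((\<Sum>I\<in>?X. (v I)\<^sup>2) / 2 ^ h + 4 ^ h * 2 ^ h) / 2"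
    by (simp add: sum_divide_distrib[symmetric] sum.distrib card_X)
  also have "\<dots> \<le> (16 ^ h / 2 ^ h + 4 ^ h * 2 ^ h) / 2"
    using parseval by (simp add: divide_right_mono)
  also have "\<dots> = 8 ^ h"
    by (simp add: field_simps flip: power_mult_distrib)
  finally show ?thesis .
qed

lemma hadamard_correlation_le_nu:
  assumes "nu_le a M"
  shows "\<bar>\<Sum>I\<in>Pow {..<2 * h}. \<Sum>J\<in>Pow {..<2 * h}. hadamard I J * M I J\<bar> \<le> a * 8 ^ h"
  using assms
proof (induction rule: nu_le.induct)
  case (rank_one f g)
  then show ?case
    using hadamard_rank_one_correlation[of f g h] by simp
next
  case (add a M b M')
  then show ?case
    by (simp add: distrib_left distrib_right sum.distrib abs_triangle_ineq order_trans[OF abs_triangle_ineq])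
next
  case (scale a M c)
  have "\<bar>\<Sum>I\<in>Pow {..<2 * h}. \<Sum>J\<in>Pow {..<2 * h}. hadamard I J * (c * M I J)\<bar>
      = \<bar>c\<bar> * \<bar>\<Sum>I\<in>Pow {..<2 * h}. \<Sum>J\<in>Pow {..<2 * h}. hadamard I J * M I J\<bar>"
    by (simp add: sum_distrib_left mult_ac flip: abs_mult)
  also have "\<dots> \<le> \<bar>c\<bar> * (a * 8 ^ h)"
    using scale.IH by (simp add: mult_left_mono)
  finally show ?case
    by (simp add: mult_ac)
next
  case (mono a M b)
  then show ?case
    by (meson order_trans mult_right_mono zero_le_power zero_le_numeral)
qed

lemma nu_le_near_hadamard:
  assumes "nu_le a M"
    and near: "\<And>I J. I \<subseteq> {..<2 * h} \<Longrightarrow> J \<subseteq> {..<2 * h} \<Longrightarrow> \<bar>M I J - hadamard I J\<bar> \<le> 1/2"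
  shows "2 ^ h \<le> 2 * a"
proof -
  let ?X = "Pow {..<2 * h}"
  have "1/2 \<le> hadamard I J * M I J" if "I \<in> ?X" "J \<in> ?X" for I J
  proof -
    have "hadamard I J * M I J = 1 + hadamard I J * (M I J - hadamard I J)"
      using hadamard_square[of I J] by (simp add: algebra_simps)
    moreover have "\<bar>hadamard I J * (M I J - hadamard I J)\<bar> \<le> 1/2"
      using near that by (simp add: abs_mult abs_hadamard)
    ultimately show ?thesis
      by linarith
  qed
  then have "(\<Sum>I\<in>?X. \<Sum>J\<in>?X. (1/2::real)) \<le> (\<Sum>I\<in>?X. \<Sum>J\<in>?X. hadamard I J * M I J)"
    by (intro sum_mono) auto
  also have "\<dots> \<le> a * 8 ^ h"
    using hadamard_correlation_le_nu[OF assms(1), of h] by linarith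
  moreover have "(\<Sum>I\<in>?X. \<Sum>J\<in>?X. (1/2::real)) = 4 ^ h * 4 ^ h / 2"
    by (simp add: card_Pow power_mult)
  moreover have "(4::real) ^ h * 4 ^ h = 2 ^ h * 8 ^ h"
    by (simp flip: power_mult_distrib)
  ultimately have "2 ^ h * 8 ^ h \<le> (2 * a) * (8::real) ^ h"
    by linarith
  then show ?thesis
    by simp
qed

section \<open>Amplification\<close>

text \<open>The probability that more than half of \<open>2 r\<close> independent runs accept, each with probability \<open>z\<close>.\<close>

definition amplify :: "nat \<Rightarrow> real \<Rightarrow> real" where
  "amplify r z = (\<Sum>j\<in>{Suc r..2 * r}. real (2 * r choose j) * z ^ j * (1 - z) ^ (2 * r - j))"

lemma one_minus_amplify:
  "1 - amplify r z = (\<Sum>j\<le>r. real (2 * r choose j) * z ^ j * (1 - z) ^ (2 * r - j))"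
proof -
  have "{..2 * r} = {..r} \<union> {Suc r..2 * r}" "{..r} \<inter> {Suc r..2 * r} = {}"
    by auto
  then have "(z + (1 - z)) ^ (2 * r)
      = (\<Sum>j\<le>r. real (2 * r choose j) * z ^ j * (1 - z) ^ (2 * r - j)) + amplify r z"
    unfolding binomial_ring amplify_def by (simp add: sum.union_disjoint)
  then show ?thesis
    by simp
qed

lemma amplify_nonneg: "0 \<le> z \<Longrightarrow> z \<le> 1 \<Longrightarrow> 0 \<le> amplify r z"
  unfolding amplify_def by (intro sum_nonneg mult_nonneg_nonneg) auto

lemma amplify_le_1: "0 \<le> z \<Longrightarrow> z \<le> 1 \<Longrightarrow> amplify r z \<le> 1"
  using one_minus_amplify[of r z] sum_nonneg[of "{..r}" "\<lambda>j. real (2 * r choose j) * z ^ j * (1 - z) ^ (2 * r - j)"]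
  by simp

lemma power_mult_power_le:
  fixes s t :: real
  assumes "0 \<le> s" "s \<le> t" "i \<le> r"
  shows "t ^ i * s ^ (2 * r - i) \<le> (t * s) ^ r"
proof -
  have "t ^ i * s ^ (2 * r - i) = (t * s) ^ i * (s * s) ^ (r - i)"
    using assms(3) by (simp add: power_mult_distrib power_add mult_2 flip: power_add)
  also have "\<dots> \<le> (t * s) ^ i * (t * s) ^ (r - i)"
    using assms by (intro mult_left_mono power_mono mult_right_mono) auto
  also have "\<dots> = (t * s) ^ r"
    using assms(3) by (simp flip: power_add)
  finally show ?thesis .
qed

lemma sum_binomial_le: "J \<subseteq> {..2 * r} \<Longrightarrow> (\<Sum>j\<in>J. real (2 * r choose j)) \<le> 4 ^ r"
  using sum_mono2[of "{..2 * r}" J "\<lambda>j. real (2 * r choose j)"]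
  by (simp add: choose_row_sum power_mult flip: of_nat_sum)

lemma binomial_terms_le:
  fixes z :: real
  assumes "0 \<le> z" "z \<le> 1" "J \<subseteq> {..2 * r}"
    and "\<And>j. j \<in> J \<Longrightarrow> z ^ j * (1 - z) ^ (2 * r - j) \<le> (z * (1 - z)) ^ r"
  shows "(\<Sum>j\<in>J. real (2 * r choose j) * z ^ j * (1 - z) ^ (2 * r - j)) \<le> (4 * z * (1 - z)) ^ r"
proof -
  have "(\<Sum>j\<in>J. real (2 * r choose j) * z ^ j * (1 - z) ^ (2 * r - j))
      \<le> (\<Sum>j\<in>J. real (2 * r choose j)) * (z * (1 - z)) ^ r"
    unfolding sum_distrib_right using assms(4) by (intro sum_mono) (simp add: mult.assoc mult_left_mono)
  also have "\<dots> \<le> 4 ^ r * (z * (1 - z)) ^ r"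
    using assms(1-3) by (intro mult_right_mono sum_binomial_le) auto
  also have "\<dots> = (4 * z * (1 - z)) ^ r"
    by (simp add: power_mult_distrib mult.assoc)
  finally show ?thesis .
qed

lemma amplify_le:
  assumes "0 \<le> z" "z \<le> 1/2"
  shows "amplify r z \<le> (4 * z * (1 - z)) ^ r"
  unfolding amplify_def
proof (rule binomial_terms_le)
  fix j
  assume j: "j \<in> {Suc r..2 * r}"
  have "(1 - z) ^ (2 * r - j) * z ^ (2 * r - (2 * r - j)) \<le> ((1 - z) * z) ^ r"
    using assms j by (intro power_mult_power_le) auto
  then show "z ^ j * (1 - z) ^ (2 * r - j) \<le> (z * (1 - z)) ^ r"
    using j by (simp add: mult.commute)
qed (use assms in auto)

lemma one_minus_amplify_le:
  assumes "1/2 \<le> z" "z \<le> 1"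
  shows "1 - amplify r z \<le> (4 * z * (1 - z)) ^ r"
  unfolding one_minus_amplify
  by (rule binomial_terms_le) (use assms in \<open>auto intro: power_mult_power_le\<close>)

lemma amplify_error:
  assumes "0 \<le> z" "z \<le> 1" "e \<Longrightarrow> 2/3 \<le> z" "\<not> e \<Longrightarrow> z \<le> 1/3"
  shows "\<bar>amplify r z - (if e then 1 else 0)\<bar> \<le> (8/9) ^ r"
proof -
  have "0 \<le> (z - 1/3) * (z - 2/3)"
    using assms by (cases e) (auto intro: mult_nonneg_nonneg mult_nonpos_nonpos)
  moreover have "4 * z * (1 - z) = 8/9 - 4 * ((z - 1/3) * (z - 2/3))"
    by (simp add: field_simps)
  ultimately have "4 * z * (1 - z) \<le> 8/9"
    by linarith
  moreover have "0 \<le> 4 * z * (1 - z)"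
    using assms(1,2) by simp
  ultimately have "(4 * z * (1 - z)) ^ r \<le> (8/9) ^ r"
    by (rule power_mono)
  moreover have "\<bar>amplify r z - (if e then 1 else 0)\<bar> \<le> (4 * z * (1 - z)) ^ r"
    using assms amplify_le[of z r] one_minus_amplify_le[of z r] amplify_nonneg[of z r] amplify_le_1[of z r]
    by (cases e) auto
  ultimately show ?thesis
    by linarith
qed

lemma nu_le_amplify:
  assumes "nu_le a M"
  shows "nu_le (4 ^ r * (1 + a) ^ (2 * r)) (\<lambda>x y. amplify r (M x y))"
proof -
  have a: "0 \<le> a"
    using nu_le_nonneg[OF assms] .
  have "nu_le (real (2 * r choose j) * (1 + a) ^ (2 * r))
      (\<lambda>x y. real (2 * r choose j) * (M x y ^ j * (1 - M x y) ^ (2 * r - j)))"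
    if j: "j \<in> {Suc r..2 * r}" for j
  proof (rule nu_le.mono)
    show "nu_le (\<bar>real (2 * r choose j)\<bar> * (a ^ j * (1 + a) ^ (2 * r - j)))
        (\<lambda>x y. real (2 * r choose j) * (M x y ^ j * (1 - M x y) ^ (2 * r - j)))"
      by (intro nu_le.scale nu_le_mult nu_le_power nu_le_one_minus assms)
    have "a ^ j * (1 + a) ^ (2 * r - j) \<le> (1 + a) ^ j * (1 + a) ^ (2 * r - j)"
      using a by (intro mult_right_mono power_mono) auto
    also have "\<dots> = (1 + a) ^ (2 * r)"
      using j by (simp flip: power_add)
    finally show "\<bar>real (2 * r choose j)\<bar> * (a ^ j * (1 + a) ^ (2 * r - j)) \<le> real (2 * r choose j) * (1 + a) ^ (2 * r)"
      by (simp add: mult_left_mono)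
  qed
  then have "nu_le (\<Sum>j\<in>{Suc r..2 * r}. real (2 * r choose j) * (1 + a) ^ (2 * r))
      (\<lambda>x y. \<Sum>j\<in>{Suc r..2 * r}. real (2 * r choose j) * (M x y ^ j * (1 - M x y) ^ (2 * r - j)))"
    by (intro nu_le_sum) auto
  moreover have "(\<Sum>j\<in>{Suc r..2 * r}. real (2 * r choose j) * (1 + a) ^ (2 * r)) \<le> 4 ^ r * (1 + a) ^ (2 * r)"
    unfolding sum_distrib_right[symmetric] using a by (intro mult_right_mono sum_binomial_le) auto
  ultimately show ?thesis
    by (auto intro: nu_le.mono nu_le_cong simp: amplify_def mult.assoc)
qed

section \<open>From inner product to majority\<close>

definition pad :: "nat \<Rightarrow> nat \<Rightarrow> nat set \<Rightarrow> nat \<Rightarrow> bool" where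
  "pad m p I i \<longleftrightarrow> (i < m \<and> i \<in> I) \<or> (m \<le> i \<and> i < m + p)"

lemma MAJ_pad:
  assumes "I \<subseteq> {..<m}" "J \<subseteq> {..<m}" "2 * m \<le> n" "1 \<le> t" "t \<le> m"
  shows "MAJ n (pad m ((n + 1) div 2 - t) I) (pad m ((n + 1) div 2 - t) J) \<longleftrightarrow> t \<le> card (I \<inter> J)"
proof -
  let ?p = "(n + 1) div 2 - t"
  have "m + ?p \<le> n"
    using assms(3,4) by linarith
  then have "{i. i < n \<and> pad m ?p I i \<and> pad m ?p J i} = (I \<inter> J) \<union> {m..<m + ?p}"
    using assms(1,2) unfolding pad_def by auto
  moreover have "card ((I \<inter> J) \<union> {m..<m + ?p}) = card (I \<inter> J) + ?p"
    using assms(1) by (subst card_Un_disjoint) (auto intro: finite_subset)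
  ultimately have "MAJ n (pad m ?p I) (pad m ?p J) \<longleftrightarrow> n \<le> 2 * (card (I \<inter> J) + ?p)"
    unfolding MAJ_def by simp
  also have "\<dots> \<longleftrightarrow> t \<le> card (I \<inter> J)"
    using assms(3,5) by arith
  finally show ?thesis .
qed

lemma neg_one_power_eq_threshold_sum:
  assumes "s \<le> m"
  shows "(-1::real) ^ s = 1 - 2 * (\<Sum>t=1..m. (-1) ^ (t + 1) * (if t \<le> s then 1 else 0))"
proof -
  have "(\<Sum>t=1..m. (-1::real) ^ (t + 1) * (if t \<le> s then 1 else 0)) = (\<Sum>t=1..s. (-1) ^ (t + 1))"
    using assms by (intro sum.mono_neutral_cong_right) auto
  also have "\<dots> = (1 - (-1) ^ s) / 2"
    by (induction s) (auto simp: field_simps)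
  finally show ?thesis
    by simp
qed

text \<open>Since \<open>(-1)\<^bsup>|I \<inter> J|\<^esup>\<close> is the alternating sum of the thresholds \<open>[t \<le> |I \<inter> J|]\<close>, and each
  threshold is a majority of padded inputs, a protocol for \<open>MAJ\<close> computes an approximation of the
  inner-product matrix.\<close>

definition hadamard_approx :: "nat \<Rightarrow> qprotocol \<Rightarrow> nat \<Rightarrow> nat \<Rightarrow> nat set \<Rightarrow> nat set \<Rightarrow> real" where
  "hadamard_approx n P m r I J = 1 - 2 * (\<Sum>t=1..m. (-1) ^ (t + 1) *
     amplify r (prob_one n P (pad m ((n + 1) div 2 - t) I) (pad m ((n + 1) div 2 - t) J)))"

lemma nu_le_hadamard_approx:
  assumes "wf_protocol n P"
  shows "nu_le (1 + 2 * (m * (4 ^ r * (1 + 2 * 4 ^ length (rounds P)) ^ (2 * r)))) (hadamard_approx n P m r)"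
proof -
  let ?B = "4 ^ r * (1 + 2 * 4 ^ length (rounds P)) ^ (2 * r) :: real"
  define S where "S I J = (\<Sum>t=1..m. (-1) ^ (t + 1) *
     amplify r (prob_one n P (pad m ((n + 1) div 2 - t) I) (pad m ((n + 1) div 2 - t) J)))" for I J
  have "nu_le ?B (\<lambda>I J. amplify r (prob_one n P (pad m ((n + 1) div 2 - t) I) (pad m ((n + 1) div 2 - t) J)))" for t
    by (rule nu_le_amplify[OF nu_le_prob_one[OF assms]])
  then have "nu_le (\<Sum>t=1..m. ?B) S"
    unfolding S_def by (intro nu_le_sum nu_le_scale_le_1) auto
  then have "nu_le (1 + \<bar>-2\<bar> * (\<Sum>t=1..m. ?B)) (\<lambda>I J. 1 + (-2) * S I J)"
    by (intro nu_le.add nu_le_one nu_le.scale)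
  then have "nu_le (1 + 2 * (m * ?B)) (\<lambda>I J. 1 + (-2) * S I J)"
    by simp
  then show ?thesis
    by (rule nu_le_cong) (simp add: hadamard_approx_def S_def)
qed

lemma hadamard_approx_close:
  assumes P: "computes n (MAJ n) P" and "2 * m \<le> n" and IJ: "I \<subseteq> {..<m}" "J \<subseteq> {..<m}"
  shows "\<bar>hadamard_approx n P m r I J - hadamard I J\<bar> \<le> 2 * m * (8/9) ^ r"
proof -
  let ?s = "card (I \<inter> J)"
  define z where "z t = prob_one n P (pad m ((n + 1) div 2 - t) I) (pad m ((n + 1) div 2 - t) J)" for t
  have wf: "wf_protocol n P"
    using P unfolding computes_def by blast
  have "?s \<le> card {..<m}"
    using IJ by (intro card_mono) auto
  then have s: "?s \<le> m"
    by simp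
  have err: "\<bar>amplify r (z t) - (if t \<le> ?s then 1 else 0)\<bar> \<le> (8/9) ^ r" if "t \<in> {1..m}" for t
  proof (rule amplify_error)
    have "MAJ n (pad m ((n + 1) div 2 - t) I) (pad m ((n + 1) div 2 - t) J) \<longleftrightarrow> t \<le> ?s"
      using that assms(2) IJ by (intro MAJ_pad) auto
    moreover have "if MAJ n (pad m ((n + 1) div 2 - t) I) (pad m ((n + 1) div 2 - t) J)
        then 2/3 \<le> z t else z t \<le> 1/3"
      using P unfolding computes_def z_def by blast
    ultimately show "t \<le> ?s \<Longrightarrow> 2/3 \<le> z t" "\<not> t \<le> ?s \<Longrightarrow> z t \<le> 1/3"
      by auto
  qed (use prob_one_nonneg prob_one_le_1[OF wf] in \<open>auto simp: z_def\<close>)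
  have "hadamard_approx n P m r I J - hadamard I J
      = -2 * (\<Sum>t=1..m. (-1) ^ (t + 1) * (amplify r (z t) - (if t \<le> ?s then 1 else 0)))"
    unfolding hadamard_approx_def hadamard_def neg_one_power_eq_threshold_sum[OF s] z_def
    by (simp add: sum_subtractf sum_negf right_diff_distrib)
  also have "\<bar>\<dots>\<bar> \<le> 2 * (\<Sum>t=1..m. \<bar>amplify r (z t) - (if t \<le> ?s then 1 else 0)\<bar>)"
    by (simp add: abs_mult order_trans[OF sum_abs])
  also have "\<dots> \<le> 2 * (\<Sum>t=1..m. (8/9) ^ r)"
    using err by (intro mult_left_mono sum_mono) auto
  finally show ?thesis
    by simp
qed

theorem MAJ_cost_bound:
  assumes P: "computes n (MAJ n) P" and "4 * h \<le> n" and "real (8 * h) * (8/9) ^ r \<le> 1"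
  shows "(2::real) ^ h \<le> 2 + 8 * real h * (4 ^ r * (1 + 2 * 4 ^ length (rounds P)) ^ (2 * r))"
proof -
  have wf: "wf_protocol n P"
    using P unfolding computes_def by blast
  have "2 ^ h \<le> 2 * (1 + 2 * (real (2 * h) * (4 ^ r * (1 + 2 * 4 ^ length (rounds P)) ^ (2 * r))))"
  proof (rule nu_le_near_hadamard[OF nu_le_hadamard_approx[OF wf]])
    fix I J
    assume "I \<subseteq> {..<2 * h}" "J \<subseteq> {..<2 * h}"
    with P assms(2) have "\<bar>hadamard_approx n P (2 * h) r I J - hadamard I J\<bar> \<le> 2 * real (2 * h) * (8/9) ^ r"
      by (intro hadamard_approx_close) auto
    with assms(3) show "\<bar>hadamard_approx n P (2 * h) r I J - hadamard I J\<bar> \<le> 1/2"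
      by simp
  qed
  then show ?thesis
    by (simp add: algebra_simps)
qed

section \<open>A protocol for majority\<close>

definition perm_op :: "(nat set \<Rightarrow> nat set) \<Rightarrow> qop" where
  "perm_op \<sigma> c a = (if c = \<sigma> a then 1 else 0)"

lemma unitary_on_perm_op:
  assumes "\<And>a. a \<subseteq> S \<Longrightarrow> \<sigma> a \<subseteq> S" "\<And>a. a \<subseteq> S \<Longrightarrow> \<sigma> (\<sigma> a) = a" "finite S"
  shows "unitary_on S (perm_op \<sigma>)"
  unfolding unitary_on_def
proof (intro ballI)
  fix a a'
  assume "a \<in> Pow S" "a' \<in> Pow S"
  then have "a \<subseteq> S" "a' \<subseteq> S"
    by auto
  then have inj: "\<sigma> a = \<sigma> a' \<longleftrightarrow> a = a'" and "\<sigma> a \<in> Pow S"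
    using assms(1,2) by (metis, simp)
  have "(\<Sum>c\<in>Pow S. cnj (perm_op \<sigma> c a) * perm_op \<sigma> c a')
      = (\<Sum>c\<in>Pow S. if c = \<sigma> a then (if \<sigma> a = \<sigma> a' then 1 else 0) else 0)"
    by (intro sum.cong refl) (simp add: perm_op_def)
  also have "\<dots> = (if a = a' then 1 else 0)"
    using assms(3) \<open>\<sigma> a \<in> Pow S\<close> inj by simp
  finally show "(\<Sum>c\<in>Pow S. cnj (perm_op \<sigma> c a) * perm_op \<sigma> c a') = (if a = a' then 1 else 0)" .
qed

lemma apply_op_perm_op:
  assumes "\<And>a. a \<subseteq> S \<Longrightarrow> \<sigma> a \<subseteq> S" "\<And>a. a \<subseteq> S \<Longrightarrow> \<sigma> (\<sigma> a) = a" "finite S"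
  shows "apply_op S (perm_op \<sigma>) \<psi> b = \<psi> (\<sigma> (b \<inter> S) \<union> (b - S))"
proof -
  have "apply_op S (perm_op \<sigma>) \<psi> b = (\<Sum>c\<in>Pow S. if c = \<sigma> (b \<inter> S) then \<psi> (c \<union> (b - S)) else 0)"
    unfolding apply_op_def perm_op_def
  proof (intro sum.cong refl)
    fix c
    assume "c \<in> Pow S"
    then have "b \<inter> S = \<sigma> c \<longleftrightarrow> c = \<sigma> (b \<inter> S)"
      using assms(2) by (metis Int_lower2 PowD)
    then show "(if b \<inter> S = \<sigma> c then 1 else 0) * \<psi> (c \<union> (b - S))
        = (if c = \<sigma> (b \<inter> S) then \<psi> (c \<union> (b - S)) else 0)"
      by simp
  qed
  also have "\<dots> = \<psi> (\<sigma> (b \<inter> S) \<union> (b - S))"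
    using assms(1,3) by simp
  finally show ?thesis .
qed

lemma forward_rounds:
  assumes "distinct L" "set L \<inter> A = {}" "set L \<subseteq> {0..<N}"
  shows "valid_rounds N (map (\<lambda>q. (False, perm_op id, q)) L @ rs) A = valid_rounds N rs (A \<union> set L)
    \<and> exec_rounds N (map (\<lambda>q. (False, perm_op id, q)) L @ rs) A \<psi> = exec_rounds N rs (A \<union> set L) \<psi>"
  using assms
proof (induction L arbitrary: A)
  case Nil
  then show ?case by simp
next
  case (Cons q L)
  have "unitary_on ({0..<N} - A) (perm_op id)" "apply_op ({0..<N} - A) (perm_op id) \<psi>' = \<psi>'" for \<psi>'
    by (auto simp: unitary_on_perm_op apply_op_perm_op Int_Diff_Un)
  moreover have "insert q A \<union> set L = A \<union> set (q # L)"
    by auto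
  ultimately show ?case
    using Cons by (simp add: id_def)
qed

definition maj_flip :: "nat \<Rightarrow> nat set \<Rightarrow> nat set" where
  "maj_flip n a = (if MAJ n (\<lambda>i. i \<in> a) (\<lambda>i. n + i \<in> a)
     then (if 2 * n \<in> a then a - {2 * n} else insert (2 * n) a) else a)"

lemma MAJ_set_cong:
  assumes "\<And>i. i < 2 * n \<Longrightarrow> i \<in> a \<longleftrightarrow> i \<in> a'"
  shows "MAJ n (\<lambda>i. i \<in> a) (\<lambda>i. n + i \<in> a) \<longleftrightarrow> MAJ n (\<lambda>i. i \<in> a') (\<lambda>i. n + i \<in> a')"
proof -
  have "{i. i < n \<and> i \<in> a \<and> n + i \<in> a} = {i. i < n \<and> i \<in> a' \<and> n + i \<in> a'}"
    using assms by auto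
  then show ?thesis
    unfolding MAJ_def by simp
qed

lemma maj_flip_maj_flip: "maj_flip n (maj_flip n a) = a"
proof -
  let ?maj = "\<lambda>a. MAJ n (\<lambda>i. i \<in> a) (\<lambda>i. n + i \<in> a)"
  have "?maj (a - {2 * n}) = ?maj a" "?maj (insert (2 * n) a) = ?maj a"
    by (rule MAJ_set_cong; auto)+
  then show ?thesis
    unfolding maj_flip_def by auto
qed

lemma maj_flip_subset: "a \<subseteq> {0..<2 * n + 1} \<Longrightarrow> maj_flip n a \<subseteq> {0..<2 * n + 1}"
  unfolding maj_flip_def by auto

text \<open>Bob forwards his input qubits to Alice, who writes \<open>MAJ\<close> into the output qubit.\<close>

definition majority_protocol :: "nat \<Rightarrow> qprotocol" where
  "majority_protocol n = \<lparr>nqubits = 2 * n + 1, alice_init = {0..<n} \<union> {2 * n},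
     rounds = map (\<lambda>q. (False, perm_op id, q)) [n..<2 * n] @ [(True, perm_op (maj_flip n), 2 * n)],
     out_qubit = 2 * n\<rparr>"

lemma majority_protocol_rounds:
  "valid_rounds (2 * n + 1) (rounds (majority_protocol n)) (alice_init (majority_protocol n))
   \<and> exec_rounds (2 * n + 1) (rounds (majority_protocol n)) (alice_init (majority_protocol n)) \<psi>
     = apply_op {0..<2 * n + 1} (perm_op (maj_flip n)) \<psi>"
proof -
  have "({0..<n} \<union> {2 * n}) \<union> set [n..<2 * n] = {0..<2 * n + 1}"
    by auto
  moreover have "unitary_on {0..<2 * n + 1} (perm_op (maj_flip n))"
    by (intro unitary_on_perm_op maj_flip_subset maj_flip_maj_flip) auto
  ultimately show ?thesis
    using forward_rounds[of "[n..<2 * n]" "{0..<n} \<union> {2 * n}" "2 * n + 1"]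
    by (simp add: majority_protocol_def)
qed

lemma prob_one_majority_protocol:
  "prob_one n (majority_protocol n) x y = (if MAJ n x y then 1 else 0)"
proof -
  let ?S = "{0..<2 * n + 1}"
  define b0 where "b0 = {i. i < n \<and> x i} \<union> {n + i |i. i < n \<and> y i}"
  have final: "final_state n (majority_protocol n) x y b = (if b = maj_flip n b0 then 1 else 0)"
    if "b \<subseteq> ?S" for b
  proof -
    have "final_state n (majority_protocol n) x y b = apply_op ?S (perm_op (maj_flip n)) (init_state n x y) b"
      using majority_protocol_rounds[of n] by (simp add: final_state_def majority_protocol_def)
    also have "\<dots> = init_state n x y (maj_flip n b)"
      using apply_op_perm_op[OF maj_flip_subset maj_flip_maj_flip finite_atLeastLessThan] that
      by (simp add: Int_absorb2 Diff_eq_empty_iff[THEN iffD2])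
    also have "\<dots> = (if b = maj_flip n b0 then 1 else 0)"
      unfolding init_state_def b0_def[symmetric] by (metis maj_flip_maj_flip)
    finally show ?thesis .
  qed
  have "{i. i < n \<and> i \<in> b0 \<and> n + i \<in> b0} = {i. i < n \<and> x i \<and> y i}"
    unfolding b0_def by auto
  then have "MAJ n (\<lambda>i. i \<in> b0) (\<lambda>i. n + i \<in> b0) = MAJ n x y"
    unfolding MAJ_def by simp
  moreover have "b0 \<subseteq> ?S" "2 * n \<notin> b0"
    unfolding b0_def by auto
  ultimately have flip: "maj_flip n b0 \<subseteq> ?S" "2 * n \<in> maj_flip n b0 \<longleftrightarrow> MAJ n x y"
    using maj_flip_subset[of b0 n] unfolding maj_flip_def by auto
  have "nqubits (majority_protocol n) = 2 * n + 1" "out_qubit (majority_protocol n) = 2 * n"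
    by (simp_all add: majority_protocol_def)
  then have "prob_one n (majority_protocol n) x y = (\<Sum>b\<in>{b \<in> Pow ?S. 2 * n \<in> b}. if b = maj_flip n b0 then 1 else 0)"
    unfolding prob_one_def by (intro sum.cong refl) (simp_all add: final)
  also have "\<dots> = (if MAJ n x y then 1 else 0)"
    using flip by auto
  finally show ?thesis .
qed

lemma computes_majority_protocol: "computes n (MAJ n) (majority_protocol n)"
proof -
  have "{n..<2 * n} \<inter> ({0..<n} \<union> {2 * n}) = {}"
    by auto
  then have "wf_protocol n (majority_protocol n)"
    unfolding wf_protocol_def using majority_protocol_rounds[of n]
    by (simp add: majority_protocol_def subset_insertI)
  then show ?thesis
    unfolding computes_def by (simp add: prob_one_majority_protocol)
qed

text \<open>\<open>BQC\<close> is defined by \<open>LEAST\<close>, so a lower bound on it needs some protocol to exist.\<close>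

lemma BQC_MAJ_attained: "\<exists>P. computes n (MAJ n) P \<and> length (rounds P) = BQC n (MAJ n)"
  unfolding BQC_def by (rule LeastI_ex) (use computes_majority_protocol in blast)

section \<open>The asymptotic bound\<close>

lemma MAJ_cost_log_bound:
  assumes P: "computes n (MAJ n) P" and h: "1 \<le> h" "4 * h \<le> n" and r: "real (8 * h) * (8/9) ^ r \<le> 1"
  shows "real h * ln 2 \<le> ln (10 * real h) + real r * ln 36 + real r * real (length (rounds P)) * ln 16"
proof -
  define c where "c = length (rounds P)"
  define W where "W = (36::real) ^ r * 16 ^ (r * c)"
  have "(1::real) * 1 \<le> 36 ^ r * 16 ^ (r * c)"
    by (intro mult_mono) simp_all
  then have W: "1 \<le> W"
    by (simp add: W_def)
  have "(1 + 2 * 4 ^ c :: real) ^ (2 * r) \<le> (3 * 4 ^ c) ^ (2 * r)"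
    by (intro power_mono) simp_all
  also have "\<dots> = (3 ^ 2) ^ r * (4 ^ 2) ^ (r * c)"
    by (simp only: power_mult_distrib power_mult[symmetric] mult_ac)
  finally have base: "(1 + 2 * 4 ^ c :: real) ^ (2 * r) \<le> 9 ^ r * 16 ^ (r * c)"
    by simp
  have "(2::real) ^ h \<le> 2 + 8 * real h * (4 ^ r * (1 + 2 * 4 ^ c) ^ (2 * r))"
    unfolding c_def by (rule MAJ_cost_bound[OF P h(2) r])
  also have "\<dots> \<le> 2 + 8 * real h * (4 ^ r * (9 ^ r * 16 ^ (r * c)))"
    by (intro add_left_mono mult_left_mono base) simp_all
  also have "\<dots> = 2 + 8 * (h * W)"
    by (simp add: W_def mult.assoc flip: power_mult_distrib)
  also have "\<dots> \<le> 10 * (h * W)"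
    using mult_mono[of 1 "real h" 1 W] h(1) W by (simp add: mult.commute)
  finally have "ln ((2::real) ^ h) \<le> ln (10 * h * W)"
    using h(1) W by (simp add: mult.assoc)
  also have "\<dots> = ln (10 * h) + ln W"
    using h(1) W by (simp add: ln_mult)
  finally show ?thesis
    by (simp add: ln_realpow ln_mult W_def c_def)
qed

lemma log_ceiling_amplification:
  assumes "1 \<le> x"
  defines "r \<equiv> nat \<lceil>log (9/8) x\<rceil>"
  shows "x * (8/9) ^ r \<le> 1" "real r \<le> log (9/8) x + 1"
proof -
  have "0 \<le> log (9/8) x"
    using assms(1) by simp
  then have r: "log (9/8) x \<le> r" "r \<le> log (9/8) x + 1"
    unfolding r_def by linarith+
  then have "x \<le> (9/8) ^ r"
    using assms(1) by (simp add: log_le_iff powr_realpow)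
  then have "x * (8/9) ^ r \<le> (9/8) ^ r * (8/9) ^ r"
    by (rule mult_right_mono) simp
  also have "\<dots> = 1"
    by (simp flip: power_mult_distrib)
  finally show "x * (8/9) ^ r \<le> 1" .
  show "real r \<le> log (9/8) x + 1"
    using r(2) .
qed

definition MAJ_lower :: "nat \<Rightarrow> real" where
  "MAJ_lower n = ((real n / 4 - 1) * ln 2 - ln (10 * real n) - (log (9/8) (2 * real n) + 1) * ln 36)
     / ((log (9/8) (2 * real n) + 1) * ln 16)"

lemma MAJ_lower_le_BQC:
  assumes "4 \<le> n"
  shows "MAJ_lower n \<le> BQC n (MAJ n)"
proof -
  obtain P where P: "computes n (MAJ n) P" and c: "length (rounds P) = BQC n (MAJ n)"
    using BQC_MAJ_attained by blast
  define h where "h = n div 4"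
  define L where "L = log (9/8) (2 * real n)"
  define r where "r = nat \<lceil>L\<rceil>"
  have h: "1 \<le> h" "4 * h \<le> n" "real n / 4 - 1 \<le> h"
    using assms unfolding h_def by linarith+
  have r: "2 * real n * (8/9) ^ r \<le> 1" "real r \<le> L + 1"
    using log_ceiling_amplification[of "2 * real n"] assms unfolding r_def L_def by auto
  have "real (8 * h) * (8/9) ^ r \<le> 2 * real n * (8/9) ^ r"
    using h(2) by (intro mult_right_mono) auto
  from MAJ_cost_log_bound[OF P h(1,2) order_trans[OF this r(1)]]
  have "real h * ln 2 - ln (10 * real h) - real r * ln 36 \<le> real r * real (BQC n (MAJ n)) * ln 16"
    unfolding c by simp
  moreover have "(real n / 4 - 1) * ln 2 \<le> real h * ln 2" "ln (10 * real h) \<le> ln (10 * real n)"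
    using h by (simp_all add: mult_right_mono)
  moreover have "real r * ln 36 \<le> (L + 1) * ln 36"
    "real r * real (BQC n (MAJ n)) * ln 16 \<le> (L + 1) * real (BQC n (MAJ n)) * ln 16"
    using r(2) by (simp_all add: mult_right_mono)
  ultimately have "(real n / 4 - 1) * ln 2 - ln (10 * real n) - (L + 1) * ln 36
      \<le> (L + 1) * BQC n (MAJ n) * ln 16"
    by linarith
  moreover have "0 \<le> L"
    unfolding L_def using assms by simp
  ultimately show ?thesis
    unfolding MAJ_lower_def L_def[symmetric] by (simp add: pos_divide_le_eq mult_ac)
qed

theorem theorem6p12:
  shows "(\<lambda>n. real (BQC n (MAJ n))) \<in> \<Omega>(\<lambda>n. real n / ln (real n))"
proof -
  have "(\<lambda>n. real n / ln (real n)) \<in> O(MAJ_lower)"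
    unfolding MAJ_lower_def by real_asymp
  moreover have "MAJ_lower \<in> O(\<lambda>n. real (BQC n (MAJ n)))"
  proof (rule bigoI[where c = 1])
    have "filterlim MAJ_lower at_top at_top"
      unfolding MAJ_lower_def by real_asymp
    then have "eventually (\<lambda>n. 0 \<le> MAJ_lower n) at_top"
      by (simp add: filterlim_at_top)
    then show "eventually (\<lambda>n. norm (MAJ_lower n) \<le> 1 * norm (real (BQC n (MAJ n)))) at_top"
      using eventually_ge_at_top[of 4] by eventually_elim (simp add: MAJ_lower_le_BQC)
  qed
  ultimately show ?thesis
    unfolding bigomega_iff_bigo by (rule landau_o.big_trans)
qed

end
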